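(* Let $\mathbf{h}=(h_1,\dots,h_p)\subset\mathbb{Z}[X_1,\dots,X_n]$ satisfy assumption $\mathsf{G}$, $V=V(\mathbf{h})$, and let $\delta$ be an upper bound on the cardinality of $W(\pi_1,V)$. Consider the linear forms $u^{(i)}=L_1+iL_2+\cdots+i^{p-1}L_p$ for $i\in\{1,\dots,8(p-1)\delta\}$. Then at least $7/8$ of these linear forms have coefficient vector $\mathbf{u}=(1,i,\dots,i^{p-1})$ satisfying $u_1\ell_{\mathbf{x},1}+\cdots+u_p\ell_{\mathbf{x},p}\ne0$ for every $\mathbf{x}\in W(\pi_1,V)$, where $\boldsymbol{\ell}_{\mathbf{x}}=[\ell_{\mathbf{x},1},\dots,\ell_{\mathbf{x},p}]$ is a nonzero vector in the left nullspace of $\mathrm{jac}_{\mathbf{x}}(\mathbf{h},1)$.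
   Context: $\pi_1(x_1,\dots,x_n)=x_1$; $V(\mathbf{h})\subset\mathbb{C}^n$ the zero-set. $\mathrm{jac}(\mathbf{h})$ is the Jacobian matrix; $\mathrm{jac}(\mathbf{h},1)=(\partial h_i/\partial X_j)_{1\le i\le p,\,2\le j\le n}$. $W(\pi_1,V)$ is the set of points $\mathbf{x}\in V$, not in the singular locus of $V$, with $\pi_1(T_{\mathbf{x}}V)=\{0\}$. For a $(p-1)$-minor $m$ of $\mathrm{jac}(\mathbf{h},1)$, $\mathsf{Minors}(\mathbf{h},m)$ is the vector of $p$-minors obtained by adding the missing row and a missing column to $m$, $\mathcal{O}(m)=\{m\ne0\}$. Assumption $\mathsf{G}$: (1) $\mathrm{jac}(\mathbf{h})$ has rank $p$ on $V$; (2) $\mathrm{jac}(\mathbf{h},1)$ has rank $p-1$ on $W(\pi_1,V)$ (so $\boldsymbol{\ell}_{\mathbf{x}}$ is unique up to scalar); (3) $W(\pi_1,V)$ is finite; (4) for each $(p-1)$-minor $m$, $\mathbf{h},\mathsf{Minors}(\mathbf{h},m)$ define $W(\pi_1,V)$ in $\mathcal{O}(m)$ with Jacobian of rank $n$ on $W(\pi_1,V)\cap\mathcal{O}(m)$. *)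

theory Defs
  imports "HOL-Analysis.Analysis"
begin

text \<open>Points of complex affine n-space are encoded as functions
  x :: nat => complex that vanish outside the index range {..<n}; coordinate X_(j+1)
  of the paper is index j, so pi_1 is evaluation at index 0. Polynomials are
  represented by their polynomial functions.\<close>

definition cspace :: "nat \<Rightarrow> (nat \<Rightarrow> complex) set" where
  "cspace n = {x. \<forall>j\<ge>n. x j = 0}"

inductive poly_fun :: "nat \<Rightarrow> complex set \<Rightarrow> ((nat \<Rightarrow> complex) \<Rightarrow> complex) \<Rightarrow> bool"
  for n :: nat and K :: "complex set" where
  pf_const: "c \<in> K \<Longrightarrow> poly_fun n K (\<lambda>x. c)"
| pf_var: "j < n \<Longrightarrow> poly_fun n K (\<lambda>x. x j)"
| pf_add: "poly_fun n K f \<Longrightarrow> poly_fun n K g \<Longrightarrow> poly_fun n K (\<lambda>x. f x + g x)"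
| pf_mult: "poly_fun n K f \<Longrightarrow> poly_fun n K g \<Longrightarrow> poly_fun n K (\<lambda>x. f x * g x)"

definition pdiff :: "((nat \<Rightarrow> complex) \<Rightarrow> complex) \<Rightarrow> nat \<Rightarrow> (nat \<Rightarrow> complex) \<Rightarrow> complex" where
  "pdiff f j x = deriv (\<lambda>t. f (x(j := t))) (x j)"

definition lin_indep_fam :: "nat \<Rightarrow> 'i set \<Rightarrow> ('i \<Rightarrow> nat \<Rightarrow> complex) \<Rightarrow> bool" where
  "lin_indep_fam m I r \<longleftrightarrow>
     (\<forall>c. (\<forall>j<m. (\<Sum>i\<in>I. c i * r i j) = 0) \<longrightarrow> (\<forall>i\<in>I. c i = 0))"

definition mat_rank :: "nat \<Rightarrow> nat \<Rightarrow> (nat \<Rightarrow> nat \<Rightarrow> complex) \<Rightarrow> nat" where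
  "mat_rank p m A = Max {card I | I. I \<subseteq> {..<p} \<and> lin_indep_fam m I A}"

definition cdim :: "nat \<Rightarrow> (nat \<Rightarrow> complex) set \<Rightarrow> nat" where
  "cdim n S = Max {card B | B. finite B \<and> B \<subseteq> S \<and> lin_indep_fam n B (\<lambda>b. b)}"

definition zero_set :: "nat \<Rightarrow> nat \<Rightarrow> (nat \<Rightarrow> (nat \<Rightarrow> complex) \<Rightarrow> complex) \<Rightarrow> (nat \<Rightarrow> complex) set" where
  "zero_set n p h = {x \<in> cspace n. \<forall>i<p. h i x = 0}"

definition jac :: "(nat \<Rightarrow> (nat \<Rightarrow> complex) \<Rightarrow> complex) \<Rightarrow> (nat \<Rightarrow> complex) \<Rightarrow> nat \<Rightarrow> nat \<Rightarrow> complex" where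
  "jac h x i j = pdiff (h i) j x"

text \<open>jac(h,1): drop the first column (index 0); column k of jac1 is column k+1 of jac.\<close>
definition jac1 :: "(nat \<Rightarrow> (nat \<Rightarrow> complex) \<Rightarrow> complex) \<Rightarrow> (nat \<Rightarrow> complex) \<Rightarrow> nat \<Rightarrow> nat \<Rightarrow> complex" where
  "jac1 h x i k = pdiff (h i) (Suc k) x"

definition van_ideal :: "nat \<Rightarrow> (nat \<Rightarrow> complex) set \<Rightarrow> ((nat \<Rightarrow> complex) \<Rightarrow> complex) set" where
  "van_ideal n V = {g. poly_fun n UNIV g \<and> (\<forall>y\<in>V. g y = 0)}"

definition tangent_space :: "nat \<Rightarrow> (nat \<Rightarrow> complex) set \<Rightarrow> (nat \<Rightarrow> complex) \<Rightarrow> (nat \<Rightarrow> complex) set" where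
  "tangent_space n V x = {v \<in> cspace n. \<forall>g\<in>van_ideal n V. (\<Sum>j<n. pdiff g j x * v j) = 0}"

text \<open>Non-singular (regular) points of V: x in V whose tangent space dimension does
  not exceed that at all nearby points of V (equivalently, dim T_x V = local dimension).\<close>
definition regular_pt :: "nat \<Rightarrow> (nat \<Rightarrow> complex) set \<Rightarrow> (nat \<Rightarrow> complex) \<Rightarrow> bool" where
  "regular_pt n V x \<longleftrightarrow> x \<in> V \<and>
     (\<exists>e>0. \<forall>y\<in>V. (\<forall>j<n. cmod (y j - x j) < e) \<longrightarrow>
        cdim n (tangent_space n V x) \<le> cdim n (tangent_space n V y))"

definition crit_W :: "nat \<Rightarrow> (nat \<Rightarrow> complex) set \<Rightarrow> (nat \<Rightarrow> complex) set" where
  "crit_W n V = {x. regular_pt n V x \<and> (\<forall>v\<in>tangent_space n V x. v 0 = 0)}"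

text \<open>Determinant of the submatrix of A with rows R and columns C (both listed in
  increasing order; card R = card C).\<close>
definition subdet :: "(nat \<Rightarrow> nat \<Rightarrow> complex) \<Rightarrow> nat set \<Rightarrow> nat set \<Rightarrow> complex" where
  "subdet A R C =
     (let k = card R; rl = sorted_list_of_set R; cl = sorted_list_of_set C in
      \<Sum>\<sigma> | \<sigma> permutes {..<k}. of_int (sign \<sigma>) * (\<Prod>a<k. A (rl ! a) (cl ! (\<sigma> a))))"

definition left_null_nz :: "nat \<Rightarrow> nat \<Rightarrow> (nat \<Rightarrow> (nat \<Rightarrow> complex) \<Rightarrow> complex) \<Rightarrow> (nat \<Rightarrow> complex) \<Rightarrow> (nat \<Rightarrow> complex) \<Rightarrow> bool" where
  "left_null_nz n p h x l \<longleftrightarrow> (\<exists>i<p. l i \<noteq> 0) \<and>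
     (\<forall>k<n - 1. (\<Sum>i<p. l i * jac1 h x i k) = 0)"

text \<open>A (p-1)-minor m of jac(h,1) is given by a row set R and a column
  set C of jac(h,1). Minors(h,m) consists of the p-minors with all rows and
  columns C plus one further column c not in C; these are listed as the functions
  F k for p <= k < p + q, after h_1..h_p (F k = h k for k < p).\<close>
definition assumption_G :: "nat \<Rightarrow> nat \<Rightarrow> (nat \<Rightarrow> (nat \<Rightarrow> complex) \<Rightarrow> complex) \<Rightarrow> bool" where
  "assumption_G n p h \<longleftrightarrow>
    (let V = zero_set n p h; W = crit_W n V in
     (\<forall>x\<in>V. mat_rank p n (jac h x) = p) \<and>
     (\<forall>x\<in>W. mat_rank p (n - 1) (jac1 h x) = p - 1) \<and>
     finite W \<and>
     (\<forall>R C. R \<subseteq> {..<p} \<and> card R = p - 1 \<and> C \<subseteq> {..<n - 1} \<and> card C = p - 1 \<longrightarrow>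
        (let Om = {x \<in> cspace n. subdet (jac1 h x) R C \<noteq> 0};
             cs = sorted_list_of_set ({..<n - 1} - C);
             q = length cs;
             F = (\<lambda>k x. if k < p then h k x
                        else subdet (jac1 h x) {..<p} (insert (cs ! (k - p)) C))
         in {x \<in> Om. \<forall>k < p + q. F k x = 0} = W \<inter> Om \<and>
            (\<forall>x \<in> W \<inter> Om. mat_rank (p + q) n (jac F x) = n))))"

end

theory Submission
  imports Defs "HOL-Computational_Algebra.Polynomial"
begin

text \<open>At a point x of W(pi_1, V), jac(h,1) has rank p - 1, so its left nullspace is a line
  and all admissible vectors l are multiples of one of them. For the coefficient vector
  u = (1, i, ..., i^(p-1)), the sum u_1 l_1 + ... + u_p l_p is the value at i of the nonzero
  polynomial l_1 + l_2 T + ... + l_p T^(p-1), which has at most p - 1 roots. Hence each point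
  of W excludes at most p - 1 of the values i, at most (p - 1) delta in total, which is
  one eighth of the 8 (p - 1) delta candidates.\<close>

lemma card_of_nat_zeros_le:
  fixes c :: "nat \<Rightarrow> 'a::{idom,ring_char_0}"
  assumes "j < p" "c j \<noteq> 0"
  shows "finite {i::nat. (\<Sum>k<p. of_nat i ^ k * c k) = 0}"
    and "card {i::nat. (\<Sum>k<p. of_nat i ^ k * c k) = 0} \<le> p - 1"
proof -
  define P where "P = (\<Sum>k<p. monom (c k) k)"
  define Z where "Z = {i::nat. (\<Sum>k<p. of_nat i ^ k * c k) = 0}"
  have poly_P: "poly P z = (\<Sum>k<p. z ^ k * c k)" for z
    unfolding P_def poly_sum poly_monom by (simp add: mult.commute)
  have "coeff P j = c j"
    unfolding P_def coeff_sum coeff_monom using assms(1) by simp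
  then have "P \<noteq> 0"
    using assms(2) by auto
  have "degree P \<le> p - 1"
    unfolding P_def by (rule degree_sum_le) (auto intro: order.trans[OF degree_monom_le])
  have roots: "of_nat ` Z \<subseteq> {z. poly P z = 0}"
    unfolding Z_def poly_P by auto
  have fin_roots: "finite {z. poly P z = 0}"
    using poly_roots_finite[OF \<open>P \<noteq> 0\<close>] .
  have inj: "inj_on (of_nat :: nat \<Rightarrow> 'a) Z"
    by (auto simp: inj_on_def)
  show "finite Z"
    using finite_subset[OF roots fin_roots] inj finite_imageD by blast
  have "card Z = card (of_nat ` Z :: 'a set)"
    using card_image[OF inj] by simp
  also have "\<dots> \<le> card {z. poly P z = 0}"
    using card_mono[OF fin_roots roots] .
  also have "\<dots> \<le> degree P"
    using card_poly_roots_bound[OF \<open>P \<noteq> 0\<close>] .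
  finally show "card Z \<le> p - 1"
    using \<open>degree P \<le> p - 1\<close> by simp
qed

definition left_null :: "nat \<Rightarrow> nat \<Rightarrow> (nat \<Rightarrow> nat \<Rightarrow> complex) \<Rightarrow> (nat \<Rightarrow> complex) \<Rightarrow> bool" where
  "left_null p m A l \<longleftrightarrow> (\<forall>k<m. (\<Sum>i<p. l i * A i k) = 0)"

lemma left_null_nz_iff:
  "left_null_nz n p h x l \<longleftrightarrow> (\<exists>i<p. l i \<noteq> 0) \<and> left_null p (n - 1) (jac1 h x) l"
  unfolding left_null_nz_def left_null_def ..

lemma left_null_diff:
  assumes "left_null p m A l" "left_null p m A l'"
  shows "left_null p m A (\<lambda>i. l' i - c * l i)"
proof -
  have "(\<Sum>i<p. (l' i - c * l i) * A i k) = (\<Sum>i<p. l' i * A i k) - c * (\<Sum>i<p. l i * A i k)" for k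
    by (simp add: algebra_simps sum_subtractf sum_distrib_left)
  then show ?thesis
    using assms unfolding left_null_def by simp
qed

lemma mat_rank_obtains_indep_rows:
  assumes "mat_rank p m A = r"
  obtains I where "I \<subseteq> {..<p}" "lin_indep_fam m I A" "card I = r"
proof -
  define S where "S = {card I | I. I \<subseteq> {..<p} \<and> lin_indep_fam m I A}"
  have "finite S"
    unfolding S_def by (rule finite_subset[of _ "card ` Pow {..<p}"]) auto
  moreover have "0 \<in> S"
    unfolding S_def lin_indep_fam_def by (auto intro!: exI[of _ "{}"])
  ultimately have "Max S \<in> S"
    using Max_in by blast
  then show ?thesis
    using assms that unfolding S_def mat_rank_def by auto
qed

lemma left_null_eq_0_if_vanishes_off_indep_rows:
  assumes indep: "lin_indep_fam m I A" and rows: "{..<p} = insert i0 I" "i0 \<notin> I"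
    and v: "left_null p m A v" "v i0 = 0"
  shows "\<forall>i<p. v i = 0"
proof -
  have "finite I"
    using rows(1) by (metis finite_insert finite_lessThan)
  then have "(\<Sum>i<p. v i * A i k) = (\<Sum>i\<in>I. v i * A i k)" for k
    unfolding rows(1) using rows(2) v(2) by simp
  then have "\<forall>k<m. (\<Sum>i\<in>I. v i * A i k) = 0"
    using v(1) unfolding left_null_def by simp
  then have "\<forall>i\<in>I. v i = 0"
    using indep unfolding lin_indep_fam_def by blast
  then show ?thesis
    using v(2) rows(1) by auto
qed

lemma left_null_proportional_if_corank_1:
  assumes rank: "mat_rank p m A = p - 1"
    and l: "j < p" "l j \<noteq> 0" "left_null p m A l" and l': "left_null p m A l'"
  shows "\<exists>c. \<forall>i<p. l' i = c * l i"
proof -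
  obtain I where I: "I \<subseteq> {..<p}" "lin_indep_fam m I A" "card I = p - 1"
    using mat_rank_obtains_indep_rows[OF rank] .
  have "card ({..<p} - I) = 1"
    using I l(1) by (simp add: card_Diff_subset finite_subset)
  then obtain i0 where i0: "{..<p} - I = {i0}"
    using card_1_singletonE by blast
  have rows: "{..<p} = insert i0 I" "i0 \<notin> I"
    using i0 I(1) by auto
  note vanishes = left_null_eq_0_if_vanishes_off_indep_rows[OF I(2) rows]
  have "l i0 \<noteq> 0"
    using vanishes[OF l(3)] l(1,2) by blast
  define c where "c = l' i0 / l i0"
  have "l' i0 - c * l i0 = 0"
    unfolding c_def using \<open>l i0 \<noteq> 0\<close> by simp
  then have "\<forall>i<p. l' i - c * l i = 0"
    by (rule vanishes[OF left_null_diff[OF l(3) l']])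
  then show ?thesis
    by auto
qed

lemma card_left_null_zeros_le:
  assumes rank: "mat_rank p m A = p - 1"
  defines "Z \<equiv> {i::nat. \<exists>l. (\<exists>j<p. l j \<noteq> 0) \<and> left_null p m A l \<and> (\<Sum>k<p. of_nat i ^ k * l k) = 0}"
  shows "finite Z \<and> card Z \<le> p - 1"
proof (cases "Z = {}")
  case False
  then obtain l0 j where l0: "j < p" "l0 j \<noteq> 0" "left_null p m A l0"
    unfolding Z_def by blast
  have "Z \<subseteq> {i::nat. (\<Sum>k<p. of_nat i ^ k * l0 k) = 0}"
  proof
    fix i assume "i \<in> Z"
    then obtain l where l: "\<exists>j<p. l j \<noteq> 0" "left_null p m A l" "(\<Sum>k<p. of_nat i ^ k * l k) = 0"
      unfolding Z_def by blast
    obtain c where c: "\<forall>k<p. l k = c * l0 k"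
      using left_null_proportional_if_corank_1[OF rank l0 l(2)] by blast
    then have "c \<noteq> 0"
      using l(1) by auto
    have "(\<Sum>k<p. of_nat i ^ k * l k) = c * (\<Sum>k<p. of_nat i ^ k * l0 k)"
      using c by (simp add: sum_distrib_left algebra_simps)
    then show "i \<in> {i::nat. (\<Sum>k<p. of_nat i ^ k * l0 k) = 0}"
      using l(3) \<open>c \<noteq> 0\<close> by simp
  qed
  then show ?thesis
    using card_of_nat_zeros_le[where c = l0, OF l0(1,2)] card_mono finite_subset by (meson order.trans)
qed simp

lemma card_le_card_avoiding_plus:
  assumes "finite A" "finite W" and B: "\<And>x. x \<in> W \<Longrightarrow> finite (B x) \<and> card (B x) \<le> d"
  shows "card A \<le> card {a \<in> A. \<forall>x\<in>W. a \<notin> B x} + card W * d"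
proof -
  define G where "G = {a \<in> A. \<forall>x\<in>W. a \<notin> B x}"
  have "card A = card G + card (A - G)"
    using card_Int_Diff[OF \<open>finite A\<close>, of G] by (simp add: G_def Int_absorb1)
  also have "card (A - G) \<le> card (\<Union>x\<in>W. B x)"
    using assms by (intro card_mono) (auto simp: G_def)
  also have "\<dots> \<le> (\<Sum>x\<in>W. card (B x))"
    using card_UN_le[OF \<open>finite W\<close>] .
  also have "\<dots> \<le> card W * d"
    using B sum_bounded_above[of W "\<lambda>x. card (B x)" d] by auto
  finally show ?thesis
    unfolding G_def by simp
qed

theorem proposition5p4:
  fixes n p :: nat and h :: "nat \<Rightarrow> (nat \<Rightarrow> complex) \<Rightarrow> complex" and \<delta> :: nat
  assumes hpoly: "\<forall>i<p. poly_fun n \<int> (h i)"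
    and G: "assumption_G n p h"
    and bound: "card (crit_W n (zero_set n p h)) \<le> \<delta>"
  shows "7 * (8 * (p - 1) * \<delta>) \<le>
    8 * card {i \<in> {1..8 * (p - 1) * \<delta>}.
      \<forall>x \<in> crit_W n (zero_set n p h). \<forall>l. left_null_nz n p h x l \<longrightarrow>
        (\<Sum>j<p. of_nat i ^ j * l j) \<noteq> 0}"
proof -
  define W where "W = crit_W n (zero_set n p h)"
  define d where "d = (p - 1) * \<delta>"
  define excluded where "excluded x = {i::nat. \<exists>l. left_null_nz n p h x l \<and>
      (\<Sum>j<p. of_nat i ^ j * l j) = 0}" for x
  define Good where "Good = {i \<in> {1..8 * d}. \<forall>x\<in>W. i \<notin> excluded x}"
  have "finite W" and rank: "\<forall>x\<in>W. mat_rank p (n - 1) (jac1 h x) = p - 1"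
    using G unfolding assumption_G_def Let_def W_def by auto
  have "finite (excluded x) \<and> card (excluded x) \<le> p - 1" if "x \<in> W" for x
    using card_left_null_zeros_le[OF rank[rule_format, OF that]]
    unfolding excluded_def left_null_nz_iff by simp
  then have "card {1..8 * d} \<le> card Good + card W * (p - 1)"
    unfolding Good_def using card_le_card_avoiding_plus[OF _ \<open>finite W\<close>] by blast
  moreover have "card W * (p - 1) \<le> d"
    using bound unfolding W_def d_def by simp
  ultimately have "7 * (8 * d) \<le> 8 * card Good"
    by simp
  then show ?thesis
    unfolding d_def Good_def W_def excluded_def by (auto simp: mult.assoc)
qed

end
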